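(* Let $A$ be a ring and $\mathfrak{I}$ an ideal of $A$ such that $A$ is separated and complete for the $\mathfrak{I}$-adic topology. Let ${}^*A$ be the ultrapower of $A$ with respect to a nonprincipal ultrafilter on $\mathbb{N}$ and $\mu(0):=\bigcap_{n>0}{}^*(\mathfrak{I}^n)$. Then: (i) $\varprojlim_n{}^*A/{}^*(\mathfrak{I}^{n+1})\cong{}^*A/\mu(0)$; (ii) there is a natural injective ring homomorphism $\widehat{A}\hookrightarrow{}^*A/\mu(0)$; (iii) this homomorphism is an isomorphism $\widehat{A}\cong{}^*A/\mu(0)$ if and only if $A/\mathfrak{I}^{n+1}$ is finite for every $n\in\mathbb{N}$.
   Context: $\widehat{A}=\varprojlim_n A/\mathfrak{I}^{n+1}$ is the $\mathfrak{I}$-adic completion (isomorphic to $A$ by assumption). ${}^*(\mathfrak{I}^n)$ denotes the nonstandard extension (ultrapower) of the ideal $\mathfrak{I}^n$, an ideal of ${}^*A$; the map in (ii) is induced by the diagonal embedding $A\to{}^*A$. *)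

theory Defs
  imports "HOL-Algebra.Algebra"
begin

fun ideal_pow :: "('a, 'm) ring_scheme \<Rightarrow> 'a set \<Rightarrow> nat \<Rightarrow> 'a set" where
  "ideal_pow A I 0 = carrier A"
| "ideal_pow A I (Suc n) = ideal_prod A I (ideal_pow A I n)"

definition adic_separated :: "('a, 'm) ring_scheme \<Rightarrow> 'a set \<Rightarrow> bool" where
  "adic_separated A I \<longleftrightarrow> (\<Inter>n. ideal_pow A I n) = {\<zero>\<^bsub>A\<^esub>}"

definition adic_complete :: "('a, 'm) ring_scheme \<Rightarrow> 'a set \<Rightarrow> bool" where
  "adic_complete A I \<longleftrightarrow>
     (\<forall>x :: nat \<Rightarrow> 'a. (\<forall>k. x k \<in> carrier A) \<longrightarrow>
        (\<forall>n. \<exists>N. \<forall>m\<ge>N. \<forall>k\<ge>N. x m \<ominus>\<^bsub>A\<^esub> x k \<in> ideal_pow A I n) \<longrightarrow>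
        (\<exists>a\<in>carrier A. \<forall>n. \<exists>N. \<forall>m\<ge>N. x m \<ominus>\<^bsub>A\<^esub> a \<in> ideal_pow A I n))"

definition free_ultrafilter_nat :: "nat filter \<Rightarrow> bool" where
  "free_ultrafilter_nat U \<longleftrightarrow>
     U \<noteq> bot \<and> (\<forall>P. eventually P U \<or> eventually (\<lambda>n. \<not> P n) U) \<and>
     (\<forall>S. finite S \<longrightarrow> \<not> eventually (\<lambda>n. n \<in> S) U)"

text \<open>Inverse limit of a tower of quotient rings R 0 <- R 1 <- ..., where R n is a quotient
  by an ideal J n with J (n+1) contained in J n; the transition map sends a coset of J (n+1)
  to the unique coset of J n containing it, so compatibility means f (Suc n) \<subseteq> f n.\<close>
definition coset_limit :: "(nat \<Rightarrow> 'b set ring) \<Rightarrow> (nat \<Rightarrow> 'b set) ring" where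
  "coset_limit R = \<lparr> carrier = {f. (\<forall>n. f n \<in> carrier (R n)) \<and> (\<forall>n. f (Suc n) \<subseteq> f n)},
                     monoid.mult = (\<lambda>f g n. f n \<otimes>\<^bsub>R n\<^esub> g n),
                     monoid.one = (\<lambda>n. \<one>\<^bsub>R n\<^esub>),
                     ring.zero = (\<lambda>n. \<zero>\<^bsub>R n\<^esub>),
                     ring.add = (\<lambda>f g n. f n \<oplus>\<^bsub>R n\<^esub> g n) \<rparr>"

definition adic_completion :: "('a, 'm) ring_scheme \<Rightarrow> 'a set \<Rightarrow> (nat \<Rightarrow> 'a set) ring" where
  "adic_completion A I = coset_limit (\<lambda>n. A Quot ideal_pow A I (Suc n))"

definition adic_canon :: "('a, 'm) ring_scheme \<Rightarrow> 'a set \<Rightarrow> 'a \<Rightarrow> (nat \<Rightarrow> 'a set)" where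
  "adic_canon A I a = (\<lambda>n. ideal_pow A I (Suc n) +>\<^bsub>A\<^esub> a)"

definition seq_ring :: "('a, 'm) ring_scheme \<Rightarrow> (nat \<Rightarrow> 'a) ring" where
  "seq_ring A = \<lparr> carrier = {x. \<forall>k. x k \<in> carrier A},
                  monoid.mult = (\<lambda>x y k. x k \<otimes>\<^bsub>A\<^esub> y k),
                  monoid.one = (\<lambda>k. \<one>\<^bsub>A\<^esub>),
                  ring.zero = (\<lambda>k. \<zero>\<^bsub>A\<^esub>),
                  ring.add = (\<lambda>x y k. x k \<oplus>\<^bsub>A\<^esub> y k) \<rparr>"

definition null_ideal :: "('a, 'm) ring_scheme \<Rightarrow> nat filter \<Rightarrow> (nat \<Rightarrow> 'a) set" where
  "null_ideal A U = {x \<in> carrier (seq_ring A). eventually (\<lambda>k. x k = \<zero>\<^bsub>A\<^esub>) U}"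

definition ultrapower :: "('a, 'm) ring_scheme \<Rightarrow> nat filter \<Rightarrow> (nat \<Rightarrow> 'a) set ring" where
  "ultrapower A U = seq_ring A Quot null_ideal A U"

definition star_set :: "('a, 'm) ring_scheme \<Rightarrow> nat filter \<Rightarrow> 'a set \<Rightarrow> (nat \<Rightarrow> 'a) set set" where
  "star_set A U J = {null_ideal A U +>\<^bsub>seq_ring A\<^esub> x | x.
                       x \<in> carrier (seq_ring A) \<and> eventually (\<lambda>k. x k \<in> J) U}"

definition star_diag :: "('a, 'm) ring_scheme \<Rightarrow> nat filter \<Rightarrow> 'a \<Rightarrow> (nat \<Rightarrow> 'a) set" where
  "star_diag A U a = null_ideal A U +>\<^bsub>seq_ring A\<^esub> (\<lambda>k. a)"

definition mu0 :: "('a, 'm) ring_scheme \<Rightarrow> nat filter \<Rightarrow> 'a set \<Rightarrow> (nat \<Rightarrow> 'a) set set" where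
  "mu0 A U I = (\<Inter>n\<in>{0<..}. star_set A U (ideal_pow A I n))"

end

theory Submission
  imports Defs
begin

text \<open>
  The canonical map from a ring \<open>R\<close> to the inverse limit of the \<open>R/J\<^sub>n\<close> along a decreasing
  chain of ideals has kernel \<open>\<Inter> J\<^sub>n\<close>, so whenever it is onto, \<open>lim R/J\<^sub>n \<cong> R/\<Inter> J\<^sub>n\<close>.
  For \<open>R = *A\<close> and \<open>J\<^sub>n = *(I\<^sup>n\<^sup>+\<^sup>1)\<close> it is onto by a diagonal argument: given representatives
  \<open>x\<^sub>n\<close> of a compatible family, take at coordinate \<open>k\<close> the entry of \<open>x\<^sub>d\<close>, where \<open>d \<le> k\<close> is
  as large as possible such that consecutive representatives up to \<open>d\<close> are compatible at \<open>k\<close>;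
  this is (i).
  For \<open>R = A\<close>, separation and completeness make the canonical map an isomorphism of \<open>A\<close> onto its completion,
  and the map of (ii) is the diagonal embedding \<open>A \<rightarrow> *A/\<mu>(0)\<close> transported along it; it is
  injective by separation. A class \<open>[x]\<close> of \<open>*A/\<mu>(0)\<close> is standard iff, for each \<open>n\<close>, the
  coordinates \<open>x\<^sub>k\<close> lie \<open>U\<close>-almost always in one class of \<open>A/I\<^sup>n\<^sup>+\<^sup>1\<close>. If these quotients are
  finite the ultrafilter selects such classes and completeness glues them to a point of \<open>A\<close>;
  an injective sequence in an infinite quotient gives a class that is not standard.
\<close>
lemma carrier_FactRing: "carrier (R Quot J) = (\<lambda>x. J +>\<^bsub>R\<^esub> x) ` carrier R"
  unfolding FactRing_def A_RCOSETS_def' by auto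

lemma (in ring) rcos_eq_ideal_iff:
  assumes "ideal J R" "x \<in> carrier R"
  shows "J +> x = J \<longleftrightarrow> x \<in> J"
  using ideal.rcos_const_imp_mem[OF assms(1,2)] a_rcos_zero[OF assms(1)] by blast

lemma rcos_mono: "J \<subseteq> K \<Longrightarrow> J +>\<^bsub>R\<^esub> x \<subseteq> K +>\<^bsub>R\<^esub> x"
  unfolding a_r_coset_def' by auto

definition coset_limit_map :: "('a, 'm) ring_scheme \<Rightarrow> (nat \<Rightarrow> 'a set) \<Rightarrow> 'a \<Rightarrow> nat \<Rightarrow> 'a set" where
  "coset_limit_map R J x = (\<lambda>n. J n +>\<^bsub>R\<^esub> x)"

locale ideal_chain = ring R for R :: "('a, 'm) ring_scheme" (structure) +
  fixes J :: "nat \<Rightarrow> 'a set"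
  assumes ideal_J: "ideal (J n) R"
    and J_Suc_subset: "J (Suc n) \<subseteq> J n"
begin

abbreviation lim :: "(nat \<Rightarrow> 'a set) ring" where
  "lim \<equiv> coset_limit (\<lambda>n. R Quot J n)"

lemma J_abelian_subgroup: "abelian_subgroup (J n) R"
  using abelian_subgroupI3[OF ideal.axioms(1)[OF ideal_J] is_abelian_group] .

lemma zero_mem_J: "\<zero> \<in> J n"
  using additive_subgroup.zero_closed[OF ideal.axioms(1)[OF ideal_J]] .

lemma J_antimono: "n \<le> m \<Longrightarrow> J m \<subseteq> J n"
  using J_Suc_subset by (rule decseq_SucI[unfolded decseq_def, rule_format])

lemma lim_simps:
  "carrier lim = {f. (\<forall>n. f n \<in> carrier (R Quot J n)) \<and> (\<forall>n. f (Suc n) \<subseteq> f n)}"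
  "f \<otimes>\<^bsub>lim\<^esub> g = (\<lambda>n. f n \<otimes>\<^bsub>R Quot J n\<^esub> g n)"
  "f \<oplus>\<^bsub>lim\<^esub> g = (\<lambda>n. f n \<oplus>\<^bsub>R Quot J n\<^esub> g n)"
  "\<one>\<^bsub>lim\<^esub> = (\<lambda>n. \<one>\<^bsub>R Quot J n\<^esub>)"
  "\<zero>\<^bsub>lim\<^esub> = (\<lambda>n. J n)"
  by (simp_all add: coset_limit_def FactRing_def)

lemma coset_limit_map_hom: "coset_limit_map R J \<in> ring_hom R lim"
proof (rule ring_hom_memI)
  fix x assume "x \<in> carrier R"
  then show "coset_limit_map R J x \<in> carrier lim"
    unfolding lim_simps coset_limit_map_def carrier_FactRing
    using rcos_mono[OF J_Suc_subset] by blast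
qed (simp_all add: coset_limit_map_def lim_simps fun_eq_iff
      ring_hom_memE[OF ideal.rcos_ring_hom[OF ideal_J]])

lemma coset_limit_map_eq_iff:
  assumes "x \<in> carrier R" "y \<in> carrier R"
  shows "coset_limit_map R J x = coset_limit_map R J y \<longleftrightarrow> (\<forall>n. x \<ominus> y \<in> J n)"
  unfolding coset_limit_map_def fun_eq_iff
  using quotient_eq_iff_same_a_r_cos[OF ideal_J assms] by blast

lemma a_kernel_coset_limit_map: "a_kernel R lim (coset_limit_map R J) = (\<Inter>n. J n)"
  unfolding a_kernel_def' lim_simps coset_limit_map_def fun_eq_iff
  using rcos_eq_ideal_iff[OF ideal_J] ideal.Icarr[OF ideal_J] by blast

lemma telescope:
  assumes "\<And>m. x m \<in> carrier R" "n \<le> M"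
    and "\<And>m. n \<le> m \<Longrightarrow> m < M \<Longrightarrow> x (Suc m) \<ominus> x m \<in> J m"
  shows "x M \<ominus> x n \<in> J n"
  using assms(2,3)
proof (induction M rule: dec_induct)
  case base
  have "x n \<ominus> x n = \<zero>" using assms(1) by (simp add: r_right_minus_eq)
  then show ?case using zero_mem_J by simp
next
  case (step M)
  have "x (Suc M) \<ominus> x n = (x (Suc M) \<ominus> x M) \<oplus> (x M \<ominus> x n)"
    using assms(1) by (simp add: minus_eq a_assoc l_neg r_neg1)
  moreover have "x (Suc M) \<ominus> x M \<in> J n" using step J_antimono by blast
  ultimately show ?case using step ideal.axioms(1)[OF ideal_J] additive_subgroup.a_closed by fastforce
qed

lemma diagonal_sequence:
  fixes F :: "nat filter"
  assumes cofinite: "\<And>n. eventually (\<lambda>k. n \<le> k) F"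
    and x: "\<And>n k. x n k \<in> carrier R"
    and diff: "\<And>n. eventually (\<lambda>k. x (Suc n) k \<ominus> x n k \<in> J n) F"
  obtains y where "\<And>k. y k \<in> carrier R" "\<And>n. eventually (\<lambda>k. y k \<ominus> x n k \<in> J n) F"
proof -
  define depth where "depth k = Max {i. i \<le> k \<and> (\<forall>m<i. x (Suc m) k \<ominus> x m k \<in> J m)}" for k
  have ev: "eventually (\<lambda>k. x (depth k) k \<ominus> x n k \<in> J n) F" for n
  proof -
    have "eventually (\<lambda>k. n \<le> k \<and> (\<forall>m\<in>{..<n}. x (Suc m) k \<ominus> x m k \<in> J m)) F"
      using cofinite diff by (intro eventually_conj eventually_ball_finite) auto
    then show ?thesis
    proof eventually_elim
      case (elim k)
      let ?D = "{i. i \<le> k \<and> (\<forall>m<i. x (Suc m) k \<ominus> x m k \<in> J m)}"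
      have fin: "finite ?D" by (rule finite_subset[of _ "{..k}"]) auto
      have n: "n \<in> ?D" using elim by auto
      have "n \<le> depth k" unfolding depth_def by (rule Max_ge[OF fin n])
      moreover have "depth k \<in> ?D" unfolding depth_def using Max_in[OF fin] n by blast
      ultimately show ?case using telescope[of "\<lambda>i. x i k" n "depth k"] x by auto
    qed
  qed
  show ?thesis by (rule that[of "\<lambda>k. x (depth k) k"]) (simp_all add: x ev)
qed

lemma coset_limit_representatives:
  assumes "f \<in> carrier lim"
  obtains x where "\<And>n. x n \<in> carrier R" "\<And>n. f n = J n +> x n"
    and "\<And>n. x (Suc n) \<ominus> x n \<in> J n" "\<And>n m. n \<le> m \<Longrightarrow> J n +> x m = f n"
proof -
  obtain x where x: "\<And>n. x n \<in> carrier R" and fx: "\<And>n. f n = J n +> x n"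
    using assms unfolding lim_simps carrier_FactRing by (simp add: image_iff) metis
  have diff: "x (Suc n) \<ominus> x n \<in> J n" for n
  proof -
    have "x (Suc n) \<in> f (Suc n)"
      unfolding fx by (rule abelian_subgroup.a_rcos_self[OF J_abelian_subgroup x])
    also have "\<dots> \<subseteq> f n" using assms unfolding lim_simps by blast
    finally show ?thesis
      unfolding fx using abelian_subgroup.a_rcos_module_minus[OF J_abelian_subgroup ring_axioms x x] by blast
  qed
  have "J n +> x m = f n" if "n \<le> m" for n m
    using telescope[of x n m, OF x that diff] quotient_eq_iff_same_a_r_cos[OF ideal_J x x] fx by simp
  with x fx diff show ?thesis using that by blast
qed

lemma ring_coset_limit:
  assumes "coset_limit_map R J ` carrier R = carrier lim"
  shows "ring lim"
proof -
  have "ring (lim \<lparr>carrier := coset_limit_map R J ` carrier R, zero := coset_limit_map R J \<zero>\<rparr>)"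
    by (rule ring_hom_imp_img_ring[OF coset_limit_map_hom])
  moreover have "coset_limit_map R J \<zero> = \<zero>\<^bsub>lim\<^esub>"
    unfolding coset_limit_map_def lim_simps
    using a_rcos_zero[OF ideal_J zero_mem_J] by simp
  ultimately show ?thesis using assms by simp
qed

lemma coset_limit_iso_FactRing_Inter:
  assumes surj: "coset_limit_map R J ` carrier R = carrier lim"
  shows "lim \<simeq> R Quot (\<Inter>n. J n)"
proof -
  have hom: "ring_hom_ring R lim (coset_limit_map R J)"
    by (rule ring_hom_ringI2[OF ring_axioms ring_coset_limit[OF surj] coset_limit_map_hom])
  have "R Quot (\<Inter>n. J n) \<simeq> lim"
    using ring_hom_ring.FactRing_iso[OF hom surj] unfolding a_kernel_coset_limit_map .
  moreover have "ring (R Quot (\<Inter>n. J n))"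
    using ideal.quotient_is_ring[OF ring_hom_ring.kernel_is_ideal[OF hom]]
    unfolding a_kernel_coset_limit_map .
  ultimately show ?thesis by (rule ring_iso_sym[rotated])
qed

end

declare ideal_pow.simps(2) [simp del]

lemma (in ring) ideal_ideal_pow: "ideal I R \<Longrightarrow> ideal (ideal_pow R I n) R"
  by (induction n) (simp_all add: ideal_pow.simps ideal_prod_is_ideal oneideal)

lemma (in ring) ideal_pow_Suc_subset: "ideal I R \<Longrightarrow> ideal_pow R I (Suc n) \<subseteq> ideal_pow R I n"
  using ideal_prod_inter[OF _ ideal_ideal_pow] by (auto simp: ideal_pow.simps)

lemma (in ring) ideal_chain_ideal_pow: "ideal I R \<Longrightarrow> ideal_chain R (\<lambda>n. ideal_pow R I (Suc n))"
  by (intro ideal_chain.intro ideal_chain_axioms.intro ring_axioms ideal_ideal_pow ideal_pow_Suc_subset)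

lemma adic_canon_eq: "adic_canon R I = coset_limit_map R (\<lambda>n. ideal_pow R I (Suc n))"
  by (simp add: adic_canon_def coset_limit_map_def fun_eq_iff)

lemma (in ring) adic_canon_inj:
  assumes I: "ideal I R" and sep: "adic_separated R I"
  shows "inj_on (adic_canon R I) (carrier R)"
proof (rule inj_onI)
  interpret ideal_chain R "\<lambda>n. ideal_pow R I (Suc n)" by (rule ideal_chain_ideal_pow[OF I])
  fix a b assume a: "a \<in> carrier R" and b: "b \<in> carrier R" and eq: "adic_canon R I a = adic_canon R I b"
  have "a \<ominus> b \<in> ideal_pow R I n" for n
    using a b eq coset_limit_map_eq_iff[OF a b] unfolding adic_canon_eq by (cases n) simp_all
  then show "a = b" using sep a b r_right_minus_eq unfolding adic_separated_def by blast
qed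

lemma (in ring) adic_canon_surj:
  assumes I: "ideal I R" and comp: "adic_complete R I"
  shows "adic_canon R I ` carrier R = carrier (adic_completion R I)"
proof -
  interpret ideal_chain R "\<lambda>n. ideal_pow R I (Suc n)" by (rule ideal_chain_ideal_pow[OF I])
  have "f \<in> adic_canon R I ` carrier R" if f: "f \<in> carrier lim" for f
  proof -
    obtain x where x: "\<And>n. x n \<in> carrier R"
      and fx: "\<And>n m. n \<le> m \<Longrightarrow> ideal_pow R I (Suc n) +> x m = f n"
      using coset_limit_representatives[OF f] by metis
    have "x m \<ominus> x k \<in> ideal_pow R I n" if "n \<le> m" "n \<le> k" for n m k
    proof -
      have "ideal_pow R I (Suc n) +> x m = ideal_pow R I (Suc n) +> x k"
        using fx[OF that(1)] fx[OF that(2)] by simp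
      then show ?thesis
        using quotient_eq_iff_same_a_r_cos[OF ideal_J x x] ideal_pow_Suc_subset[OF I] by blast
    qed
    then have "\<forall>n. \<exists>N. \<forall>m\<ge>N. \<forall>k\<ge>N. x m \<ominus> x k \<in> ideal_pow R I n" by blast
    then obtain a where a: "a \<in> carrier R"
      and lim: "\<And>n. \<exists>N. \<forall>m\<ge>N. x m \<ominus> a \<in> ideal_pow R I n"
      using comp[unfolded adic_complete_def, rule_format, of x] x by blast
    have "ideal_pow R I (Suc n) +> a = f n" for n
    proof -
      obtain N where "\<forall>m\<ge>N. x m \<ominus> a \<in> ideal_pow R I (Suc n)" using lim by blast
      then have "ideal_pow R I (Suc n) +> x (max N n) = ideal_pow R I (Suc n) +> a"
        using quotient_eq_iff_same_a_r_cos[OF ideal_J x a] by simp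
      then show ?thesis using fx[of n "max N n"] by simp
    qed
    then show ?thesis using a unfolding adic_canon_def by (auto simp: fun_eq_iff)
  qed
  moreover have "carrier (adic_completion R I) = carrier lim"
    by (simp add: adic_completion_def)
  ultimately show ?thesis
    using ring_hom_closed[OF coset_limit_map_hom] unfolding adic_canon_eq by blast
qed

lemma (in ring) adic_canon_ring_iso:
  assumes "ideal I R" "adic_separated R I" "adic_complete R I"
  shows "adic_canon R I \<in> ring_iso R (adic_completion R I)"
proof -
  interpret ideal_chain R "\<lambda>n. ideal_pow R I (Suc n)" by (rule ideal_chain_ideal_pow[OF assms(1)])
  show ?thesis
    unfolding ring_iso_def bij_betw_def
    using coset_limit_map_hom adic_canon_inj[OF assms(1,2)] adic_canon_surj[OF assms(1,3)]
    by (simp add: adic_canon_eq adic_completion_def)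
qed

lemma free_ultrafilter_natD:
  assumes "free_ultrafilter_nat U"
  shows free_ultrafilter_nat_proper: "U \<noteq> bot"
    and free_ultrafilter_nat_ultra: "eventually P U \<or> eventually (\<lambda>n. \<not> P n) U"
    and free_ultrafilter_nat_free: "finite S \<Longrightarrow> \<not> eventually (\<lambda>n. n \<in> S) U"
  using assms unfolding free_ultrafilter_nat_def by blast+

lemma free_ultrafilter_nat_eventually_ge:
  assumes "free_ultrafilter_nat U"
  shows "eventually (\<lambda>k. n \<le> k) U"
  using free_ultrafilter_nat_ultra[OF assms, of "\<lambda>k. k \<in> {..<n}"]
    free_ultrafilter_nat_free[OF assms, of "{..<n}"]
  by (simp add: not_less)

lemma free_ultrafilter_nat_finite_range:
  assumes U: "free_ultrafilter_nat U" and "finite F" and "eventually (\<lambda>k. g k \<in> F) U"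
  shows "\<exists>c\<in>F. eventually (\<lambda>k. g k = c) U"
  using assms(2,3)
proof (induction F rule: finite_induct)
  case empty
  then show ?case using free_ultrafilter_nat_proper[OF U] by (simp add: eventually_False)
next
  case (insert c F)
  show ?case
  proof (cases "eventually (\<lambda>k. g k = c) U")
    case False
    then have "eventually (\<lambda>k. g k \<noteq> c) U"
      using free_ultrafilter_nat_ultra[OF U, of "\<lambda>k. g k = c"] by simp
    with insert.prems have "eventually (\<lambda>k. g k \<in> F) U" by eventually_elim auto
    then show ?thesis using insert.IH by blast
  qed blast
qed

lemma free_ultrafilter_nat_not_eventually_const:
  assumes "free_ultrafilter_nat U" and "inj g"
  shows "\<not> eventually (\<lambda>k. g k = c) U"
  using free_ultrafilter_nat_free[OF assms(1) finite_vimageI[of "{c}" g]] assms(2) by simp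

lemma seq_ring_simps [simp]:
  "carrier (seq_ring A) = {x. \<forall>k. x k \<in> carrier A}"
  "x \<otimes>\<^bsub>seq_ring A\<^esub> y = (\<lambda>k. x k \<otimes>\<^bsub>A\<^esub> y k)"
  "x \<oplus>\<^bsub>seq_ring A\<^esub> y = (\<lambda>k. x k \<oplus>\<^bsub>A\<^esub> y k)"
  "\<one>\<^bsub>seq_ring A\<^esub> = (\<lambda>k. \<one>\<^bsub>A\<^esub>)"
  "\<zero>\<^bsub>seq_ring A\<^esub> = (\<lambda>k. \<zero>\<^bsub>A\<^esub>)"
  by (simp_all add: seq_ring_def)

lemma (in ring) ring_seq_ring: "ring (seq_ring R)"
proof (rule ringI)
  show "abelian_group (seq_ring R)"
  proof (rule abelian_groupI)
    fix x assume "x \<in> carrier (seq_ring R)"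
    then show "\<exists>y\<in>carrier (seq_ring R). y \<oplus>\<^bsub>seq_ring R\<^esub> x = \<zero>\<^bsub>seq_ring R\<^esub>"
      by (intro bexI[of _ "\<lambda>k. \<ominus> x k"]) (auto simp: l_neg)
  qed (auto simp: a_ac)
  show "monoid (seq_ring R)"
    by (rule monoidI) (auto simp: m_assoc)
qed (auto simp: l_distr r_distr)

lemma (in ring) seq_ring_a_inv:
  assumes "x \<in> carrier (seq_ring R)"
  shows "\<ominus>\<^bsub>seq_ring R\<^esub> x = (\<lambda>k. \<ominus> x k)"
proof -
  interpret S: ring "seq_ring R" by (rule ring_seq_ring)
  show ?thesis using assms by (intro S.minus_equality) (auto simp: l_neg)
qed

lemma (in ring) seq_ring_minus:
  assumes "x \<in> carrier (seq_ring R)" "y \<in> carrier (seq_ring R)"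
  shows "x \<ominus>\<^bsub>seq_ring R\<^esub> y = (\<lambda>k. x k \<ominus> y k)"
  using assms seq_ring_a_inv[OF assms(2)] by (simp add: a_minus_def)

definition eventually_in :: "('a, 'm) ring_scheme \<Rightarrow> nat filter \<Rightarrow> 'a set \<Rightarrow> (nat \<Rightarrow> 'a) set" where
  "eventually_in A U J = {x \<in> carrier (seq_ring A). eventually (\<lambda>k. x k \<in> J) U}"

lemma (in ring) ideal_eventually_in:
  assumes J: "ideal J R" shows "ideal (eventually_in R U J) (seq_ring R)"
proof -
  interpret J: ideal J R by (rule J)
  interpret S: ring "seq_ring R" by (rule ring_seq_ring)
  show ?thesis
  proof (rule idealI[OF ring_seq_ring])
    show "subgroup (eventually_in R U J) (add_monoid (seq_ring R))"
    proof (rule S.add.subgroupI)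
      show "eventually_in R U J \<noteq> {}"
        using J.zero_closed by (auto simp: eventually_in_def intro!: exI[of _ "\<lambda>k. \<zero>"])
    next
      fix a assume a: "a \<in> eventually_in R U J"
      then have "\<ominus>\<^bsub>seq_ring R\<^esub> a = (\<lambda>k. \<ominus> a k)"
        by (simp add: eventually_in_def seq_ring_a_inv)
      then show "\<ominus>\<^bsub>seq_ring R\<^esub> a \<in> eventually_in R U J"
        using a by (auto simp: eventually_in_def elim: eventually_mono)
    next
      fix a b assume "a \<in> eventually_in R U J" "b \<in> eventually_in R U J"
      then show "a \<oplus>\<^bsub>seq_ring R\<^esub> b \<in> eventually_in R U J"
        unfolding eventually_in_def by (auto elim: eventually_elim2)
    qed (auto simp: eventually_in_def)
  qed (auto simp: eventually_in_def J.I_l_closed J.I_r_closed elim: eventually_mono)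
qed

locale ring_ultrapower = ring A for A :: "('a, 'm) ring_scheme" (structure) +
  fixes U :: "nat filter"
  assumes free_U: "free_ultrafilter_nat U"
begin

abbreviation seq_class :: "(nat \<Rightarrow> 'a) \<Rightarrow> (nat \<Rightarrow> 'a) set" where
  "seq_class x \<equiv> null_ideal A U +>\<^bsub>seq_ring A\<^esub> x"

lemma ideal_null_ideal: "ideal (null_ideal A U) (seq_ring A)"
proof -
  have "null_ideal A U = eventually_in A U {\<zero>}"
    by (simp add: null_ideal_def eventually_in_def)
  then show ?thesis using ideal_eventually_in[OF zeroideal] by simp
qed

lemma seq_class_ring_hom_ring: "ring_hom_ring (seq_ring A) (ultrapower A U) seq_class"
  unfolding ultrapower_def by (rule ideal.rcos_ring_hom_ring[OF ideal_null_ideal])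

sublocale seq_class: ring_hom_ring "seq_ring A" "ultrapower A U" seq_class
  by (rule seq_class_ring_hom_ring)

lemma carrier_ultrapower: "carrier (ultrapower A U) = seq_class ` carrier (seq_ring A)"
  unfolding ultrapower_def by (rule carrier_FactRing)

lemma seq_class_minus:
  assumes "x \<in> carrier (seq_ring A)" "y \<in> carrier (seq_ring A)"
  shows "seq_class x \<ominus>\<^bsub>ultrapower A U\<^esub> seq_class y = seq_class (\<lambda>k. x k \<ominus> y k)"
  using assms seq_ring_minus[OF assms, symmetric] by (simp add: a_minus_def del: seq_ring_simps)

lemma seq_class_eq_iff:
  assumes "x \<in> carrier (seq_ring A)" "y \<in> carrier (seq_ring A)"
  shows "seq_class x = seq_class y \<longleftrightarrow> eventually (\<lambda>k. x k = y k) U"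
proof -
  have "seq_class x = seq_class y \<longleftrightarrow> eventually (\<lambda>k. x k \<ominus> y k = \<zero>) U"
    using seq_class.R.quotient_eq_iff_same_a_r_cos[OF ideal_null_ideal assms] assms
    by (simp add: seq_ring_minus null_ideal_def)
  also have "\<dots> \<longleftrightarrow> eventually (\<lambda>k. x k = y k) U"
    using assms by (intro eventually_cong always_eventually) (auto simp: r_right_minus_eq)
  finally show ?thesis .
qed

lemma star_set_eq: "star_set A U J = seq_class ` eventually_in A U J"
  unfolding star_set_def eventually_in_def by auto

lemma seq_class_mem_star_set_iff:
  assumes "x \<in> carrier (seq_ring A)"
  shows "seq_class x \<in> star_set A U J \<longleftrightarrow> eventually (\<lambda>k. x k \<in> J) U"
proof
  assume "seq_class x \<in> star_set A U J"
  then obtain y where y: "y \<in> eventually_in A U J" "seq_class x = seq_class y"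
    unfolding star_set_eq by blast
  then have "eventually (\<lambda>k. x k = y k) U" "eventually (\<lambda>k. y k \<in> J) U"
    using seq_class_eq_iff[OF assms] by (auto simp: eventually_in_def)
  then show "eventually (\<lambda>k. x k \<in> J) U" by eventually_elim simp
qed (use assms in \<open>auto simp: star_set_eq eventually_in_def\<close>)

lemma star_diag_eq: "star_diag A U = (\<lambda>a. seq_class (\<lambda>k. a))"
  by (simp add: star_diag_def fun_eq_iff)

lemma ideal_star_set: "ideal J A \<Longrightarrow> ideal (star_set A U J) (ultrapower A U)"
  unfolding star_set_eq ultrapower_def
  by (rule seq_class.R.ring_ideal_imp_quot_ideal[OF ideal_null_ideal ideal_eventually_in])

lemma star_set_mono: "J \<subseteq> K \<Longrightarrow> star_set A U J \<subseteq> star_set A U K"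
  unfolding star_set_eq eventually_in_def by (auto elim!: eventually_mono)

end

locale ultrapower_chain = ring_ultrapower A U + ideal_chain A J
  for A :: "('a, 'm) ring_scheme" (structure) and U :: "nat filter" and J :: "nat \<Rightarrow> 'a set"
begin

sublocale Star: ideal_chain "ultrapower A U" "\<lambda>n. star_set A U (J n)"
  by (intro ideal_chain.intro ideal_chain_axioms.intro seq_class.S.ring_axioms
      ideal_star_set ideal_J star_set_mono J_Suc_subset)

lemma star_set_rcos_eq_iff:
  assumes x: "x \<in> carrier (seq_ring A)" and y: "y \<in> carrier (seq_ring A)"
  shows "star_set A U (J n) +>\<^bsub>ultrapower A U\<^esub> seq_class x
           = star_set A U (J n) +>\<^bsub>ultrapower A U\<^esub> seq_class y
       \<longleftrightarrow> eventually (\<lambda>k. x k \<ominus> y k \<in> J n) U"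
proof -
  have "(\<lambda>k. x k \<ominus> y k) \<in> carrier (seq_ring A)" using x y by simp
  then show ?thesis
    using seq_class.S.quotient_eq_iff_same_a_r_cos[OF Star.ideal_J
        seq_class.hom_closed[OF x] seq_class.hom_closed[OF y]]
      seq_class_minus[OF x y] seq_class_mem_star_set_iff by simp
qed

lemma coset_limit_map_ultrapower_surj:
  "coset_limit_map (ultrapower A U) (\<lambda>n. star_set A U (J n)) ` carrier (ultrapower A U) = carrier Star.lim"
proof -
  have "f \<in> coset_limit_map (ultrapower A U) (\<lambda>n. star_set A U (J n)) ` carrier (ultrapower A U)"
    if f: "f \<in> carrier Star.lim" for f
  proof -
    obtain Z where Z: "\<And>n. Z n \<in> carrier (ultrapower A U)"
      and fZ: "\<And>n. f n = star_set A U (J n) +>\<^bsub>ultrapower A U\<^esub> Z n"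
      and dZ: "\<And>n. Z (Suc n) \<ominus>\<^bsub>ultrapower A U\<^esub> Z n \<in> star_set A U (J n)"
      using Star.coset_limit_representatives[OF f] by metis
    obtain x where x: "\<And>n. x n \<in> carrier (seq_ring A)" and Zx: "\<And>n. Z n = seq_class (x n)"
      using Z unfolding carrier_ultrapower by (simp add: image_iff) metis
    have diff: "eventually (\<lambda>k. x (Suc n) k \<ominus> x n k \<in> J n) U" for n
      using dZ[of n] x seq_class_mem_star_set_iff[of "\<lambda>k. x (Suc n) k \<ominus> x n k"]
      by (simp add: Zx seq_class_minus)
    have "\<And>n k. x n k \<in> carrier A" using x by simp
    then obtain y where "\<And>k. y k \<in> carrier A" and y_x: "\<And>n. eventually (\<lambda>k. y k \<ominus> x n k \<in> J n) U"
      using diagonal_sequence[OF free_ultrafilter_nat_eventually_ge[OF free_U] _ diff] by blast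
    then have y: "y \<in> carrier (seq_ring A)" by simp
    have "coset_limit_map (ultrapower A U) (\<lambda>n. star_set A U (J n)) (seq_class y) = f"
      unfolding coset_limit_map_def fun_eq_iff fZ Zx using star_set_rcos_eq_iff[OF y x] y_x by blast
    then show ?thesis using seq_class.hom_closed[OF y] by blast
  qed
  moreover have "coset_limit_map (ultrapower A U) (\<lambda>n. star_set A U (J n)) ` carrier (ultrapower A U)
      \<subseteq> carrier Star.lim"
    using ring_hom_closed[OF Star.coset_limit_map_hom] by blast
  ultimately show ?thesis by blast
qed

theorem coset_limit_ultrapower_iso:
  "Star.lim \<simeq> ultrapower A U Quot (\<Inter>n. star_set A U (J n))"
  by (rule Star.coset_limit_iso_FactRing_Inter[OF coset_limit_map_ultrapower_surj])

lemma ideal_Inter_star_set: "ideal (\<Inter>n. star_set A U (J n)) (ultrapower A U)"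
  using seq_class.S.i_Intersect[of "range (\<lambda>n. star_set A U (J n))"] Star.ideal_J by auto

lemma Inter_star_set_rcos_eq_iff:
  assumes x: "x \<in> carrier (seq_ring A)" and y: "y \<in> carrier (seq_ring A)"
  shows "(\<Inter>n. star_set A U (J n)) +>\<^bsub>ultrapower A U\<^esub> seq_class x
           = (\<Inter>n. star_set A U (J n)) +>\<^bsub>ultrapower A U\<^esub> seq_class y
       \<longleftrightarrow> (\<forall>n. eventually (\<lambda>k. x k \<ominus> y k \<in> J n) U)"
proof -
  have "(\<lambda>k. x k \<ominus> y k) \<in> carrier (seq_ring A)" using x y by simp
  then show ?thesis
    using seq_class.S.quotient_eq_iff_same_a_r_cos[OF ideal_Inter_star_set
        seq_class.hom_closed[OF x] seq_class.hom_closed[OF y]]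
      seq_class_minus[OF x y] seq_class_mem_star_set_iff by simp
qed

end

locale adic_ultrapower = ring_ultrapower +
  fixes I :: "'a set"
  assumes ideal_I: "ideal I A"
begin

sublocale ultrapower_chain A U "\<lambda>n. ideal_pow A I (Suc n)"
  by (rule ultrapower_chain.intro[OF ring_ultrapower_axioms])
    (use ideal_chain_ideal_pow[OF ideal_I] in \<open>simp add: ideal_chain_def\<close>)

lemma mu0_eq: "mu0 A U I = (\<Inter>n. star_set A U (ideal_pow A I (Suc n)))"
  by (simp add: mu0_def greaterThan_0 image_image)

abbreviation diag_mod_mu0 :: "'a \<Rightarrow> (nat \<Rightarrow> 'a) set set" where
  "diag_mod_mu0 a \<equiv> mu0 A U I +>\<^bsub>ultrapower A U\<^esub> star_diag A U a"

lemma diag_mod_mu0_hom: "diag_mod_mu0 \<in> ring_hom A (ultrapower A U Quot mu0 A U I)"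
proof -
  have "(\<lambda>a k. a) \<in> ring_hom A (seq_ring A)" by (rule ring_hom_memI) auto
  then have "star_diag A U \<in> ring_hom A (ultrapower A U)"
    using ring_hom_trans[OF _ seq_class.homh] by (simp add: comp_def star_diag_eq)
  then show ?thesis
    using ring_hom_trans[OF _ ideal.rcos_ring_hom[OF ideal_Inter_star_set]]
    by (simp add: comp_def mu0_eq)
qed

lemma diag_mod_mu0_eq_iff:
  assumes "a \<in> carrier A" "b \<in> carrier A"
  shows "diag_mod_mu0 a = diag_mod_mu0 b \<longleftrightarrow> adic_canon A I a = adic_canon A I b"
proof -
  have "diag_mod_mu0 a = diag_mod_mu0 b \<longleftrightarrow> (\<forall>n. a \<ominus> b \<in> ideal_pow A I (Suc n))"
    using Inter_star_set_rcos_eq_iff[of "\<lambda>k. a" "\<lambda>k. b"] assms free_ultrafilter_nat_proper[OF free_U]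
    by (simp add: star_diag_def mu0_eq)
  then show ?thesis using coset_limit_map_eq_iff[OF assms] by (simp add: adic_canon_eq)
qed

lemma carrier_ultrapower_Quot_mu0:
  "carrier (ultrapower A U Quot mu0 A U I)
     = (\<lambda>x. mu0 A U I +>\<^bsub>ultrapower A U\<^esub> seq_class x) ` carrier (seq_ring A)"
  unfolding carrier_FactRing carrier_ultrapower by (simp add: image_image)

lemma mu0_rcos_eq_diag_iff:
  assumes "x \<in> carrier (seq_ring A)" "a \<in> carrier A"
  shows "mu0 A U I +>\<^bsub>ultrapower A U\<^esub> seq_class x = diag_mod_mu0 a
     \<longleftrightarrow> (\<forall>n. eventually (\<lambda>k. x k \<ominus> a \<in> ideal_pow A I (Suc n)) U)"
  using Inter_star_set_rcos_eq_iff[of x "\<lambda>k. a"] assms by (simp add: star_diag_def mu0_eq)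

lemma finite_quotient_if_diag_mod_mu0_surj:
  assumes surj: "diag_mod_mu0 ` carrier A = carrier (ultrapower A U Quot mu0 A U I)"
  shows "finite (carrier (A Quot ideal_pow A I (Suc n)))"
proof (rule ccontr)
  assume "infinite (carrier (A Quot ideal_pow A I (Suc n)))"
  then obtain g :: "nat \<Rightarrow> 'a set" where g: "inj g" "range g \<subseteq> carrier (A Quot ideal_pow A I (Suc n))"
    using infinite_countable_subset by blast
  then have "\<forall>k. \<exists>v\<in>carrier A. g k = ideal_pow A I (Suc n) +> v"
    unfolding carrier_FactRing by blast
  then obtain x where x: "\<And>k. x k \<in> carrier A" and gx: "\<And>k. g k = ideal_pow A I (Suc n) +> x k"
    by metis
  then have xS: "x \<in> carrier (seq_ring A)" by simp
  then obtain a where a: "a \<in> carrier A"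
    and "mu0 A U I +>\<^bsub>ultrapower A U\<^esub> seq_class x = diag_mod_mu0 a"
    using surj unfolding carrier_ultrapower_Quot_mu0 by (metis (no_types, lifting) imageE image_eqI)
  then have "eventually (\<lambda>k. x k \<ominus> a \<in> ideal_pow A I (Suc n)) U"
    using mu0_rcos_eq_diag_iff[OF xS a] by blast
  then have "eventually (\<lambda>k. g k = ideal_pow A I (Suc n) +> a) U"
    by eventually_elim (simp add: gx quotient_eq_iff_same_a_r_cos[OF ideal_J x a])
  then show False using free_ultrafilter_nat_not_eventually_const[OF free_U g(1)] by blast
qed

lemma diag_mod_mu0_surj_if_finite_quotients:
  assumes comp: "adic_complete A I"
    and fin: "\<And>n. finite (carrier (A Quot ideal_pow A I (Suc n)))"
  shows "diag_mod_mu0 ` carrier A = carrier (ultrapower A U Quot mu0 A U I)"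
proof
  show "diag_mod_mu0 ` carrier A \<subseteq> carrier (ultrapower A U Quot mu0 A U I)"
    using ring_hom_closed[OF diag_mod_mu0_hom] by blast
  show "carrier (ultrapower A U Quot mu0 A U I) \<subseteq> diag_mod_mu0 ` carrier A"
  proof
    fix z assume "z \<in> carrier (ultrapower A U Quot mu0 A U I)"
    then obtain x where x: "x \<in> carrier (seq_ring A)" and z: "z = mu0 A U I +>\<^bsub>ultrapower A U\<^esub> seq_class x"
      unfolding carrier_ultrapower_Quot_mu0 by blast
    have "\<exists>c\<in>carrier (A Quot ideal_pow A I (Suc n)). eventually (\<lambda>k. ideal_pow A I (Suc n) +> x k = c) U" for n
      using free_ultrafilter_nat_finite_range[OF free_U fin] x by (simp add: carrier_FactRing)
    then obtain c where c: "\<And>n. c n \<in> carrier (A Quot ideal_pow A I (Suc n))"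
      and xc: "\<And>n. eventually (\<lambda>k. ideal_pow A I (Suc n) +> x k = c n) U"
      by metis
    have "c (Suc n) \<subseteq> c n" for n
    proof -
      obtain k where "ideal_pow A I (Suc n) +> x k = c n" "ideal_pow A I (Suc (Suc n)) +> x k = c (Suc n)"
        using eventually_happens'[OF free_ultrafilter_nat_proper[OF free_U] eventually_conj[OF xc xc]] by blast
      then show ?thesis using rcos_mono[OF J_Suc_subset[of n], of A "x k"] by simp
    qed
    then have "c \<in> carrier (adic_completion A I)"
      using c by (simp add: adic_completion_def coset_limit_def)
    then obtain a where a: "a \<in> carrier A" and ca: "c = adic_canon A I a"
      using adic_canon_surj[OF ideal_I comp] by blast
    have "eventually (\<lambda>k. x k \<ominus> a \<in> ideal_pow A I (Suc n)) U" for n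
      using xc[of n]
    proof eventually_elim
      case (elim k)
      have "x k \<in> carrier A" using x by simp
      then show ?case
        using elim quotient_eq_iff_same_a_r_cos[OF ideal_J _ a] by (simp add: ca adic_canon_def)
    qed
    then show "z \<in> diag_mod_mu0 ` carrier A"
      using mu0_rcos_eq_diag_iff[OF x a] z a by blast
  qed
qed

theorem adic_completion_embedding:
  assumes sep: "adic_separated A I" and comp: "adic_complete A I"
  shows "\<exists>h. h \<in> ring_hom (adic_completion A I) (ultrapower A U Quot mu0 A U I)
             \<and> inj_on h (carrier (adic_completion A I))
             \<and> (\<forall>a\<in>carrier A. h (adic_canon A I a) = diag_mod_mu0 a)
             \<and> (h \<in> ring_iso (adic_completion A I) (ultrapower A U Quot mu0 A U I)
                  \<longleftrightarrow> (\<forall>n. finite (carrier (A Quot ideal_pow A I (Suc n)))))"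
proof -
  let ?inv = "inv_into (carrier A) (adic_canon A I)"
  have inv: "?inv \<in> ring_iso (adic_completion A I) A"
    by (rule ring_iso_set_sym[OF ring_axioms adic_canon_ring_iso[OF ideal_I sep comp]])
  define h where "h = diag_mod_mu0 \<circ> ?inv"
  have hom: "h \<in> ring_hom (adic_completion A I) (ultrapower A U Quot mu0 A U I)"
    unfolding h_def using inv ring_hom_trans[OF _ diag_mod_mu0_hom] unfolding ring_iso_def by blast
  have h_canon: "h (adic_canon A I a) = diag_mod_mu0 a" if "a \<in> carrier A" for a
    unfolding h_def using inv_into_f_f[OF adic_canon_inj[OF ideal_I sep] that] by simp
  have "inj_on diag_mod_mu0 (carrier A)"
    using diag_mod_mu0_eq_iff adic_canon_inj[OF ideal_I sep] by (auto simp: inj_on_def)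
  then have inj: "inj_on h (carrier (adic_completion A I))"
    unfolding h_def using inv by (auto simp: ring_iso_def bij_betw_def intro: comp_inj_on)
  have "h ` carrier (adic_completion A I) = diag_mod_mu0 ` carrier A"
    using h_canon by (auto simp: image_image simp flip: adic_canon_surj[OF ideal_I comp])
  then have "h \<in> ring_iso (adic_completion A I) (ultrapower A U Quot mu0 A U I)
      \<longleftrightarrow> diag_mod_mu0 ` carrier A = carrier (ultrapower A U Quot mu0 A U I)"
    using hom inj by (simp add: ring_iso_def bij_betw_def)
  also have "\<dots> \<longleftrightarrow> (\<forall>n. finite (carrier (A Quot ideal_pow A I (Suc n))))"
    using finite_quotient_if_diag_mod_mu0_surj diag_mod_mu0_surj_if_finite_quotients[OF comp] by blast
  finally show ?thesis using hom inj h_canon by blast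
qed

end

theorem corollary2p6p3:
  fixes A :: "('a, 'm) ring_scheme" and I :: "'a set" and U :: "nat filter"
  assumes "cring A" and "ideal I A"
    and "adic_separated A I" and "adic_complete A I"
    and "free_ultrafilter_nat U"
  shows "coset_limit (\<lambda>n. ultrapower A U Quot star_set A U (ideal_pow A I (Suc n)))
           \<simeq> ultrapower A U Quot mu0 A U I
       \<and> (\<exists>h. h \<in> ring_hom (adic_completion A I) (ultrapower A U Quot mu0 A U I)
             \<and> inj_on h (carrier (adic_completion A I))
             \<and> (\<forall>a\<in>carrier A. h (adic_canon A I a)
                    = mu0 A U I +>\<^bsub>ultrapower A U\<^esub> star_diag A U a)
             \<and> (h \<in> ring_iso (adic_completion A I) (ultrapower A U Quot mu0 A U I)
                  \<longleftrightarrow> (\<forall>n. finite (carrier (A Quot ideal_pow A I (Suc n))))))"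
proof -
  interpret adic_ultrapower A U I
    using assms by (simp add: adic_ultrapower_def adic_ultrapower_axioms_def
        ring_ultrapower_def ring_ultrapower_axioms_def cring.axioms(1))
  show ?thesis
    using coset_limit_ultrapower_iso adic_completion_embedding[OF assms(3,4)] by (simp add: mu0_eq)
qed

end
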